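(* Let $(\mathcal G_{yz},\beta)$ be obtained from $(\mathcal G_x,\alpha)$ by decomposing the node $x$ into $y$ and $z$, and assume the FCFS chains $W_x$ and $W_{yz}$ are positive recurrent. Let $\mathbb E[Q_x]$ and $\mathbb E[Q_{yz}]$ be the stationary mean word lengths (mean numbers of items) of $W_x$ and $W_{yz}$. Then $\mathbb E[Q_x]=\mathbb E[Q_{yz}]$.
   Context: A matching model consists of a finite connected simple graph and an arrival distribution on its nodes with positive entries. Under FCFS, the state is the word of unmatched item classes in order of arrival; an arriving item of class $i$ deletes the oldest letter of the word that is a neighbour of $i$, and if there is none $i$ is appended. Decomposition: given $\mathcal G_x=(\mathcal V,\xi)$ with node $x$ and arrival distribution $\alpha$, $\mathcal G_{yz}$ has node set $(\mathcal V\setminus\{x\})\cup\{y,z\}$ with $y,z$ new nodes; edges among $\mathcal V\setminus\{x\}$ are as in $\mathcal G_x$, each of $y$ and $z$ is adjacent exactly to the neighbours of $x$ in $\mathcal G_x$ (so $y,z$ are not adjacent), and the arrival distribution $\beta$ satisfies $\beta_y>0$, $\beta_z>0$, $\beta_y+\beta_z=\alpha_x$, $\beta_i=\alpha_i$ for $i\ne x$. *)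

theory Defs
  imports "HOL-Probability.Probability"
begin

definition simple_graph :: "'v set \<Rightarrow> ('v \<Rightarrow> 'v \<Rightarrow> bool) \<Rightarrow> bool" where
  "simple_graph V E \<longleftrightarrow> finite V \<and> (\<forall>u v. E u v \<longrightarrow> u \<in> V \<and> v \<in> V)
     \<and> (\<forall>u v. E u v \<longrightarrow> E v u) \<and> (\<forall>u. \<not> E u u)"

definition graph_connected :: "'v set \<Rightarrow> ('v \<Rightarrow> 'v \<Rightarrow> bool) \<Rightarrow> bool" where
  "graph_connected V E \<longleftrightarrow> (\<forall>u\<in>V. \<forall>v\<in>V. E\<^sup>*\<^sup>* u v)"

definition matching_model :: "'v set \<Rightarrow> ('v \<Rightarrow> 'v \<Rightarrow> bool) \<Rightarrow> 'v pmf \<Rightarrow> bool" where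
  "matching_model V E \<alpha> \<longleftrightarrow> simple_graph V E \<and> graph_connected V E \<and> V \<noteq> {}
     \<and> set_pmf \<alpha> = V"

text \<open>FCFS update: arriving item of class i deletes the oldest letter of w adjacent to i,
  otherwise i is appended.\<close>
definition fcfs_step :: "('v \<Rightarrow> 'v \<Rightarrow> bool) \<Rightarrow> 'v \<Rightarrow> 'v list \<Rightarrow> 'v list" where
  "fcfs_step E i w = (if \<exists>u\<in>set w. E i u then remove1 (hd (filter (E i) w)) w else w @ [i])"

definition fcfs_kernel :: "('v \<Rightarrow> 'v \<Rightarrow> bool) \<Rightarrow> 'v pmf \<Rightarrow> 'v list \<Rightarrow> 'v list pmf" where
  "fcfs_kernel E \<alpha> w = map_pmf (\<lambda>i. fcfs_step E i w) \<alpha>"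

definition fcfs_states :: "('v \<Rightarrow> 'v \<Rightarrow> bool) \<Rightarrow> 'v pmf \<Rightarrow> 'v list set" where
  "fcfs_states E \<alpha> = {w. (\<lambda>u v. v \<in> set_pmf (fcfs_kernel E \<alpha> u))\<^sup>*\<^sup>* [] w}"

text \<open>avoid_prob K s n w = probability that the chain started in w does not visit s
  at times 1..n.\<close>
primrec avoid_prob :: "('s \<Rightarrow> 's pmf) \<Rightarrow> 's \<Rightarrow> nat \<Rightarrow> 's \<Rightarrow> real" where
  "avoid_prob K s 0 w = 1"
| "avoid_prob K s (Suc n) w =
     measure_pmf.expectation (K w) (\<lambda>v. if v = s then 0 else avoid_prob K s n v)"

text \<open>Positive recurrence: every state s of the state space S has finite expected return
  time  E_s[T_s] = sum_n P_s(T_s > n).\<close>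
definition positive_recurrent :: "('s \<Rightarrow> 's pmf) \<Rightarrow> 's set \<Rightarrow> bool" where
  "positive_recurrent K S \<longleftrightarrow> (\<forall>s\<in>S. summable (\<lambda>n. avoid_prob K s n s))"

definition stationary :: "('s \<Rightarrow> 's pmf) \<Rightarrow> 's set \<Rightarrow> 's pmf \<Rightarrow> bool" where
  "stationary K S \<pi> \<longleftrightarrow> set_pmf \<pi> \<subseteq> S \<and> bind_pmf \<pi> K = \<pi>"

definition mean_length :: "'v list pmf \<Rightarrow> ennreal" where
  "mean_length \<pi> = (\<integral>\<^sup>+ w. ennreal (real (length w)) \<partial>measure_pmf \<pi>)"

definition decomposition ::
  "'v set \<Rightarrow> ('v \<Rightarrow> 'v \<Rightarrow> bool) \<Rightarrow> 'v pmf \<Rightarrow> 'v \<Rightarrow> 'v \<Rightarrow> 'v \<Rightarrow>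
   'v set \<Rightarrow> ('v \<Rightarrow> 'v \<Rightarrow> bool) \<Rightarrow> 'v pmf \<Rightarrow> bool" where
  "decomposition V E \<alpha> x y z V' E' \<beta> \<longleftrightarrow>
     x \<in> V \<and> y \<notin> V \<and> z \<notin> V \<and> y \<noteq> z
   \<and> V' = (V - {x}) \<union> {y, z}
   \<and> (\<forall>u v. E' u v \<longleftrightarrow>
        (u \<in> V - {x} \<and> v \<in> V - {x} \<and> E u v)
      \<or> (u \<in> {y, z} \<and> v \<in> V - {x} \<and> E x v)
      \<or> (u \<in> V - {x} \<and> v \<in> {y, z} \<and> E u x))
   \<and> set_pmf \<beta> = V'
   \<and> pmf \<beta> y > 0 \<and> pmf \<beta> z > 0 \<and> pmf \<beta> y + pmf \<beta> z = pmf \<alpha> x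
   \<and> (\<forall>i\<in>V - {x}. pmf \<beta> i = pmf \<alpha> i)"

end

theory Submission imports Defs begin

text \<open>Merging the classes y and z back into x maps every FCFS word of the decomposed model
  to a word of the original one, and this relabelling commutes with the FCFS dynamics: the two
  new classes have exactly the neighbours of x and arrive with total rate alpha_x. Hence the
  image of a stationary law of W_yz is stationary for W_x, and the relabelling preserves word
  lengths. It remains to see that W_x has only one stationary law on its state space. This
  follows from the cycle formula: since the empty word is positive recurrent and every state
  is reachable from it, every state hits the empty word almost surely, and then
  pi(w) = pi(empty) * E[visits to w during an excursion] for w non-empty, while
  pi(empty) is the reciprocal of the mean return time.\<close>

lemma integrable_measure_pmf_bounded:
  fixes f :: "'a \<Rightarrow> real"
  assumes "\<And>v. \<bar>f v\<bar> \<le> B"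
  shows "integrable (measure_pmf p) f"
  using assms by (intro measure_pmf.integrable_const_bound[where B=B]) auto

lemma expectation_bind_pmf_bounded:
  fixes f :: "'b \<Rightarrow> real"
  assumes "\<And>v. \<bar>f v\<bar> \<le> B"
  shows "measure_pmf.expectation (bind_pmf p K) f
    = measure_pmf.expectation p (\<lambda>v. measure_pmf.expectation (K v) f)"
  unfolding measure_pmf_bind
  by (rule integral_bind[where K="count_space UNIV" and B=B and B'=1])
     (auto simp: assms measure_pmf_in_subprob_algebra measure_pmf.emeasure_space_1
       intro!: measure_pmf.finite_measure_axioms)

lemma expectation_split_point:
  fixes f :: "'a \<Rightarrow> real"
  assumes "\<And>v. \<bar>f v\<bar> \<le> B"
  shows "measure_pmf.expectation p f
    = pmf p a * f a + measure_pmf.expectation p (\<lambda>v. if v = a then 0 else f v)"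
proof -
  have B: "0 \<le> B" using assms[of a] by linarith
  have "measure_pmf.expectation p f
      = measure_pmf.expectation p (\<lambda>v. indicator {a} v * f a + (if v = a then 0 else f v))"
    by (rule Bochner_Integration.integral_cong) (auto simp: indicator_def)
  also have "\<dots> = measure_pmf.expectation p (\<lambda>v. indicator {a} v * f a)
      + measure_pmf.expectation p (\<lambda>v. if v = a then 0 else f v)"
    by (rule Bochner_Integration.integral_add; rule integrable_measure_pmf_bounded[where B=B])
       (use assms B in \<open>auto simp: indicator_def\<close>)
  finally show ?thesis by (simp add: measure_pmf_single)
qed

section \<open>Taboo probabilities\<close>

definition unit_valued :: "('s \<Rightarrow> real) \<Rightarrow> bool" where
  "unit_valued g \<longleftrightarrow> (\<forall>v. 0 \<le> g v \<and> g v \<le> 1)"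

definition taboo_expectation :: "'s pmf \<Rightarrow> 's \<Rightarrow> ('s \<Rightarrow> real) \<Rightarrow> real" where
  "taboo_expectation p s g = measure_pmf.expectation p (\<lambda>w. if w = s then 0 else g w)"

text \<open>The kernel killed on entering the taboo state s, acting on functions.\<close>
definition taboo_step :: "('s \<Rightarrow> 's pmf) \<Rightarrow> 's \<Rightarrow> ('s \<Rightarrow> real) \<Rightarrow> 's \<Rightarrow> real" where
  "taboo_step K s g v = taboo_expectation (K v) s g"

lemma unit_valued_abs_le_1: "unit_valued g \<Longrightarrow> \<bar>g v\<bar> \<le> 1"
  by (auto simp: unit_valued_def)

lemma integrable_taboo:
  "unit_valued g \<Longrightarrow> integrable (measure_pmf p) (\<lambda>w. if w = s then 0 else g w)"
  by (rule integrable_measure_pmf_bounded[where B=1]) (simp add: unit_valued_abs_le_1)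

lemma taboo_expectation_nonneg: "unit_valued g \<Longrightarrow> 0 \<le> taboo_expectation p s g"
  unfolding taboo_expectation_def by (rule Bochner_Integration.integral_nonneg) (auto simp: unit_valued_def)

lemma taboo_expectation_le_1: "unit_valued g \<Longrightarrow> taboo_expectation p s g \<le> 1"
  unfolding taboo_expectation_def
  by (rule measure_pmf.integral_le_const) (auto simp: unit_valued_def integrable_taboo)

lemma taboo_expectation_mono:
  assumes "unit_valued g" "unit_valued h" "\<And>v. g v \<le> h v"
  shows "taboo_expectation p s g \<le> taboo_expectation p s h"
  unfolding taboo_expectation_def
  by (rule integral_mono) (use assms in \<open>auto simp: integrable_taboo\<close>)

lemma unit_valued_taboo_step: "unit_valued g \<Longrightarrow> unit_valued (taboo_step K s g)"
  unfolding unit_valued_def taboo_step_def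
  by (auto simp: taboo_expectation_nonneg taboo_expectation_le_1 unit_valued_def)

lemma unit_valued_taboo_iter: "unit_valued g \<Longrightarrow> unit_valued ((taboo_step K s ^^ n) g)"
  by (induction n) (auto intro: unit_valued_taboo_step)

lemma avoid_prob_Suc: "avoid_prob K s (Suc n) = taboo_step K s (avoid_prob K s n)"
  by (rule ext) (simp add: taboo_step_def taboo_expectation_def)

lemma avoid_prob_eq_taboo_iter: "avoid_prob K s n = (taboo_step K s ^^ n) (\<lambda>_. 1)"
  by (induction n) (simp_all add: avoid_prob_Suc)

lemma unit_valued_avoid_prob: "unit_valued (avoid_prob K s n)"
  unfolding avoid_prob_eq_taboo_iter by (rule unit_valued_taboo_iter) (simp add: unit_valued_def)

lemma taboo_iter_le_avoid_prob:
  "unit_valued g \<Longrightarrow> (taboo_step K s ^^ n) g v \<le> avoid_prob K s n v"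
proof (induction n arbitrary: v)
  case 0
  then show ?case by (simp add: unit_valued_def)
next
  case (Suc n)
  have "taboo_expectation (K v) s ((taboo_step K s ^^ n) g)
      \<le> taboo_expectation (K v) s (avoid_prob K s n)"
    by (intro taboo_expectation_mono unit_valued_taboo_iter unit_valued_avoid_prob Suc)
  then show ?case by (simp add: avoid_prob_Suc taboo_step_def[of K s _ v])
qed

lemma stationary_taboo_expectation_step:
  assumes "bind_pmf p K = p" "unit_valued g"
  shows "taboo_expectation p s g
    = pmf p s * taboo_step K s g s + taboo_expectation p s (taboo_step K s g)"
proof -
  have "taboo_expectation p s g
      = measure_pmf.expectation (bind_pmf p K) (\<lambda>w. if w = s then 0 else g w)"
    using assms(1) by (simp add: taboo_expectation_def)
  also have "\<dots> = measure_pmf.expectation p (taboo_step K s g)"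
    unfolding taboo_step_def taboo_expectation_def
    by (rule expectation_bind_pmf_bounded[where B=1]) (simp add: assms(2) unit_valued_abs_le_1)
  also have "\<dots> = pmf p s * taboo_step K s g s + taboo_expectation p s (taboo_step K s g)"
    unfolding taboo_expectation_def
    by (rule expectation_split_point[where B=1])
       (rule unit_valued_abs_le_1[OF unit_valued_taboo_step[OF assms(2)]])
  finally show ?thesis .
qed

lemma stationary_taboo_expectation_iter:
  assumes "bind_pmf p K = p" "unit_valued g"
  shows "taboo_expectation p s g = pmf p s * (\<Sum>k<n. (taboo_step K s ^^ Suc k) g s)
    + taboo_expectation p s ((taboo_step K s ^^ n) g)"
proof (induction n)
  case (Suc n)
  from stationary_taboo_expectation_step[OF assms(1) unit_valued_taboo_iter[OF assms(2)]]
  have "taboo_expectation p s ((taboo_step K s ^^ n) g)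
      = pmf p s * (taboo_step K s ^^ Suc n) g s + taboo_expectation p s ((taboo_step K s ^^ Suc n) g)"
    by simp
  with Suc show ?case by (simp add: algebra_simps)
qed simp

lemma taboo_expectation_iter_tendsto_0:
  assumes "\<forall>v\<in>set_pmf p. (\<lambda>n. avoid_prob K s n v) \<longlonglongrightarrow> 0" "unit_valued g"
  shows "(\<lambda>n. taboo_expectation p s ((taboo_step K s ^^ n) g)) \<longlonglongrightarrow> 0"
proof (rule tendsto_sandwich[OF _ _ tendsto_const])
  have "(\<lambda>n. if v = s then 0 else avoid_prob K s n v) \<longlonglongrightarrow> 0" if "v \<in> set_pmf p" for v
    using assms(1) that by (cases "v = s") auto
  then have "(\<lambda>n. measure_pmf.expectation p (\<lambda>w. if w = s then 0 else avoid_prob K s n w))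
      \<longlonglongrightarrow> measure_pmf.expectation p (\<lambda>_. 0)"
    by (intro integral_dominated_convergence[where w="\<lambda>_. 1"])
       (auto simp: unit_valued_abs_le_1[OF unit_valued_avoid_prob] intro!: AE_pmfI)
  then show "(\<lambda>n. taboo_expectation p s (avoid_prob K s n)) \<longlonglongrightarrow> 0"
    by (simp add: taboo_expectation_def)
  show "\<forall>\<^sub>F n in sequentially. 0 \<le> taboo_expectation p s ((taboo_step K s ^^ n) g)"
    by (simp add: taboo_expectation_nonneg unit_valued_taboo_iter assms(2))
  show "\<forall>\<^sub>F n in sequentially.
      taboo_expectation p s ((taboo_step K s ^^ n) g) \<le> taboo_expectation p s (avoid_prob K s n)"
    by (intro always_eventually allI taboo_expectation_mono unit_valued_taboo_iter
        unit_valued_avoid_prob taboo_iter_le_avoid_prob assms(2))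
qed

text \<open>The cycle formula: a stationary distribution, off s, is p(s) times the expected
  occupation of an excursion from s.\<close>
lemma stationary_cycle_formula:
  assumes "bind_pmf p K = p" "\<forall>v\<in>set_pmf p. (\<lambda>n. avoid_prob K s n v) \<longlonglongrightarrow> 0"
    and "unit_valued g"
  shows "(\<lambda>n. pmf p s * (\<Sum>k<n. (taboo_step K s ^^ Suc k) g s)) \<longlonglongrightarrow> taboo_expectation p s g"
proof -
  have "(\<lambda>n. taboo_expectation p s g - taboo_expectation p s ((taboo_step K s ^^ n) g))
      \<longlonglongrightarrow> taboo_expectation p s g - 0"
    by (intro tendsto_intros taboo_expectation_iter_tendsto_0 assms(2,3))
  moreover have "taboo_expectation p s g - taboo_expectation p s ((taboo_step K s ^^ n) g)
      = pmf p s * (\<Sum>k<n. (taboo_step K s ^^ Suc k) g s)" for n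
    using stationary_taboo_expectation_iter[OF assms(1,3), of s n] by simp
  ultimately show ?thesis by simp
qed

lemma LIMSEQ_scaled_unique:
  fixes a b :: real
  assumes "(\<lambda>n. a * X n) \<longlonglongrightarrow> 1" "(\<lambda>n. b * X n) \<longlonglongrightarrow> 1"
  shows "a = b"
proof -
  have nonzero: "c \<noteq> 0" if "(\<lambda>n. c * X n) \<longlonglongrightarrow> 1" for c :: real
  proof
    assume "c = 0"
    with that have "(\<lambda>n. 0::real) \<longlonglongrightarrow> 1" by simp
    then show False using LIMSEQ_unique[OF tendsto_const] by fastforce
  qed
  have limit: "X \<longlonglongrightarrow> 1 / c" if "(\<lambda>n. c * X n) \<longlonglongrightarrow> 1" for c :: real
    using tendsto_mult[OF tendsto_const[of "1 / c"] that] nonzero[OF that] by simp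
  have "1 / a = 1 / b" by (rule LIMSEQ_unique[OF limit limit]) (fact assms)+
  then show ?thesis by simp
qed

lemma stationary_pmf_unique_if_hitting:
  assumes "bind_pmf p K = p" "\<forall>v\<in>set_pmf p. (\<lambda>n. avoid_prob K s n v) \<longlonglongrightarrow> 0"
    and "bind_pmf q K = q" "\<forall>v\<in>set_pmf q. (\<lambda>n. avoid_prob K s n v) \<longlonglongrightarrow> 0"
  shows "p = q"
proof -
  define S where "S g n = (\<Sum>k<n. (taboo_step K s ^^ Suc k) g s)" for g n
  have cycle_p: "(\<lambda>n. pmf p s * S g n) \<longlonglongrightarrow> taboo_expectation p s g" if "unit_valued g" for g
    unfolding S_def by (rule stationary_cycle_formula[OF assms(1,2) that])
  have cycle_q: "(\<lambda>n. pmf q s * S g n) \<longlonglongrightarrow> taboo_expectation q s g" if "unit_valued g" for g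
    unfolding S_def by (rule stationary_cycle_formula[OF assms(3,4) that])
  have one: "unit_valued (\<lambda>_. 1)" by (simp add: unit_valued_def)
  have mass_1: "taboo_expectation r s (\<lambda>_. 1) = 1 - pmf r s" for r
    using expectation_split_point[of "\<lambda>_. 1::real" 1 r s] by (simp add: taboo_expectation_def)
  have "(\<lambda>n. pmf r s + pmf r s * S (\<lambda>_. 1) n) \<longlonglongrightarrow> 1"
    if "(\<lambda>n. pmf r s * S (\<lambda>_. 1) n) \<longlonglongrightarrow> taboo_expectation r s (\<lambda>_. 1)" for r
    using tendsto_add[OF tendsto_const[of "pmf r s"] that] by (simp add: mass_1)
  from this[OF cycle_p[OF one]] this[OF cycle_q[OF one]]
  have at_s: "pmf p s = pmf q s"
    by (intro LIMSEQ_scaled_unique[where X="\<lambda>n. 1 + S (\<lambda>_. 1) n"]) (simp_all add: algebra_simps)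
  show ?thesis
  proof (rule pmf_eqI)
    fix w
    show "pmf p w = pmf q w"
    proof (cases "w = s")
      case False
      have ind: "unit_valued (indicator {w})" by (simp add: unit_valued_def indicator_def)
      have "(\<lambda>u. if u = s then 0 else indicator {w} u :: real) = indicator {w}"
        using False by (auto simp: indicator_def)
      then have mass_w: "taboo_expectation r s (indicator {w}) = pmf r w" for r
        by (simp add: taboo_expectation_def measure_pmf_single)
      show ?thesis
        using LIMSEQ_unique[OF cycle_p[OF ind]] cycle_q[OF ind] at_s by (simp add: mass_w)
    qed (use at_s in simp)
  qed
qed

lemma avoid_prob_Suc_ge:
  assumes "v \<noteq> s"
  shows "pmf (K u) v * avoid_prob K s n v \<le> avoid_prob K s (Suc n) u"
proof -
  have "avoid_prob K s (Suc n) u = pmf (K u) v * avoid_prob K s n v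
      + measure_pmf.expectation (K u) (\<lambda>x. if x = v then 0 else if x = s then 0 else avoid_prob K s n x)"
    using assms
    by (simp only: avoid_prob.simps, subst expectation_split_point[where B=1])
       (auto simp: unit_valued_abs_le_1[OF unit_valued_avoid_prob])
  moreover have "0 \<le> measure_pmf.expectation (K u)
      (\<lambda>x. if x = v then 0 else if x = s then 0 else avoid_prob K s n x)"
    using unit_valued_avoid_prob[of K s n] by (auto simp: unit_valued_def)
  ultimately show ?thesis by simp
qed

text \<open>A path from s to v avoiding s afterwards prefixes every s-avoiding path from v.\<close>
lemma avoid_prob_reachable_le:
  assumes "(\<lambda>u v. v \<in> set_pmf (K u))\<^sup>*\<^sup>* s v"
  shows "\<exists>k c. c > 0 \<and> (\<forall>n. c * avoid_prob K s n v \<le> avoid_prob K s (n + k) s)"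
  using assms
proof (induction rule: rtranclp_induct)
  case (step u v)
  show ?case
  proof (cases "v = s")
    case False
    from step.IH obtain k c where c: "c > 0" "\<And>n. c * avoid_prob K s n u \<le> avoid_prob K s (n + k) s"
      by blast
    have "(c * pmf (K u) v) * avoid_prob K s n v \<le> avoid_prob K s (n + Suc k) s" for n
    proof -
      have "(c * pmf (K u) v) * avoid_prob K s n v \<le> c * avoid_prob K s (Suc n) u"
        using avoid_prob_Suc_ge[OF False, of K u n] c(1) by (simp add: mult.assoc)
      also have "\<dots> \<le> avoid_prob K s (n + Suc k) s" using c(2)[of "Suc n"] by simp
      finally show ?thesis .
    qed
    moreover have "pmf (K u) v > 0" using step.hyps(2) by (simp add: pmf_positive)
    ultimately show ?thesis using c(1) by (intro exI[of _ "Suc k"] exI[of _ "c * pmf (K u) v"]) auto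
  qed (intro exI[of _ 0] exI[of _ "1::real"], simp)
qed (intro exI[of _ 0] exI[of _ "1::real"], simp)

lemma avoid_prob_tendsto_0_if_reachable:
  assumes "summable (\<lambda>n. avoid_prob K s n s)" "(\<lambda>u v. v \<in> set_pmf (K u))\<^sup>*\<^sup>* s v"
  shows "(\<lambda>n. avoid_prob K s n v) \<longlonglongrightarrow> 0"
proof -
  obtain k c where c: "c > 0" "\<And>n. c * avoid_prob K s n v \<le> avoid_prob K s (n + k) s"
    using avoid_prob_reachable_le[OF assms(2)] by blast
  show ?thesis
  proof (rule tendsto_sandwich[OF _ _ tendsto_const])
    show "\<forall>\<^sub>F n in sequentially. 0 \<le> avoid_prob K s n v"
      using unit_valued_avoid_prob[of K s] by (simp add: unit_valued_def)
    show "\<forall>\<^sub>F n in sequentially. avoid_prob K s n v \<le> avoid_prob K s (n + k) s / c"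
      using c by (simp add: pos_le_divide_eq mult.commute)
    show "(\<lambda>n. avoid_prob K s (n + k) s / c) \<longlonglongrightarrow> 0"
      by (intro tendsto_divide_zero LIMSEQ_ignore_initial_segment summable_LIMSEQ_zero assms(1))
  qed
qed

lemma stationary_unique_if_positive_recurrent_state:
  fixes K :: "'s \<Rightarrow> 's pmf" and s :: 's
  defines "S \<equiv> {v. (\<lambda>u v. v \<in> set_pmf (K u))\<^sup>*\<^sup>* s v}"
  assumes "summable (\<lambda>n. avoid_prob K s n s)" "stationary K S p" "stationary K S q"
  shows "p = q"
proof -
  have hits: "\<forall>v\<in>set_pmf r. (\<lambda>n. avoid_prob K s n v) \<longlonglongrightarrow> 0" if "stationary K S r" for r
    using that avoid_prob_tendsto_0_if_reachable[OF assms(2)]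
    unfolding stationary_def S_def by blast
  have "bind_pmf p K = p" "bind_pmf q K = q"
    using assms(3,4) by (simp_all add: stationary_def)
  with hits[OF assms(3)] hits[OF assms(4)] show ?thesis
    by (intro stationary_pmf_unique_if_hitting[of p K s q]) simp_all
qed

section \<open>Relabelling classes in the FCFS chain\<close>

lemma stationary_map_pmf_lumped:
  assumes "stationary K' S' \<pi>" "\<And>w. w \<in> S' \<Longrightarrow> K (h w) = map_pmf h (K' w)" "h ` S' \<subseteq> S"
  shows "stationary K S (map_pmf h \<pi>)"
proof -
  have "bind_pmf (map_pmf h \<pi>) K = bind_pmf \<pi> (\<lambda>w. map_pmf h (K' w))"
    using assms(1,2) by (auto simp: bind_map_pmf stationary_def intro!: bind_pmf_cong)
  also have "\<dots> = map_pmf h \<pi>"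
    using assms(1) by (simp add: map_bind_pmf[symmetric] stationary_def)
  finally show ?thesis using assms(1,3) by (auto simp: stationary_def)
qed

lemma map_remove1_hd_filter:
  assumes "\<forall>u\<in>set w. P u = P' (f u)" "filter P w \<noteq> []"
  shows "map f (remove1 (hd (filter P w)) w) = remove1 (f (hd (filter P w))) (map f w)"
  using assms
proof (induction w)
  case (Cons u w)
  show ?case
  proof (cases "P u")
    case False
    then have "filter P w \<noteq> []" using Cons.prems by simp
    then have "hd (filter P w) \<in> set w" "P (hd (filter P w))"
      using hd_in_set[of "filter P w"] by auto
    with False Cons show ?thesis by auto
  qed simp
qed simp

lemma fcfs_step_map:
  assumes "\<forall>u\<in>set w. E' i u = E (f i) (f u)"
  shows "map f (fcfs_step E' i w) = fcfs_step E (f i) (map f w)"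
proof (cases "\<exists>u\<in>set w. E' i u")
  case True
  then have "filter (E' i) w \<noteq> []" by (simp add: filter_empty_conv)
  moreover have "filter (E (f i)) (map f w) = map f (filter (E' i) w)"
    using assms by (simp add: filter_map comp_def cong: filter_cong)
  ultimately show ?thesis
    using True assms map_remove1_hd_filter[where P="E' i" and P'="E (f i)", OF assms]
    by (auto simp: fcfs_step_def hd_map)
qed (use assms in \<open>auto simp: fcfs_step_def\<close>)

lemma set_fcfs_step: "set (fcfs_step E i w) \<subseteq> insert i (set w)"
  using set_remove1_subset[of _ w] by (auto simp: fcfs_step_def)

lemma fcfs_kernel_map:
  assumes "\<forall>a\<in>set_pmf \<beta>. \<forall>b\<in>set_pmf \<beta>. E' a b = E (f a) (f b)" "map_pmf f \<beta> = \<alpha>"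
    and "set w \<subseteq> set_pmf \<beta>"
  shows "fcfs_kernel E \<alpha> (map f w) = map_pmf (map f) (fcfs_kernel E' \<beta> w)"
proof -
  have "map_pmf (map f) (fcfs_kernel E' \<beta> w) = map_pmf (\<lambda>i. map f (fcfs_step E' i w)) \<beta>"
    by (simp add: fcfs_kernel_def map_pmf_comp)
  also have "\<dots> = map_pmf (\<lambda>i. fcfs_step E (f i) (map f w)) \<beta>"
    using assms(1,3) by (intro map_pmf_cong fcfs_step_map) auto
  finally show ?thesis by (simp add: fcfs_kernel_def map_pmf_comp flip: assms(2))
qed

lemma fcfs_states_map:
  assumes "\<forall>a\<in>set_pmf \<beta>. \<forall>b\<in>set_pmf \<beta>. E' a b = E (f a) (f b)" "map_pmf f \<beta> = \<alpha>"
    and "w \<in> fcfs_states E' \<beta>"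
  shows "set w \<subseteq> set_pmf \<beta> \<and> map f w \<in> fcfs_states E \<alpha>"
  using assms(3) unfolding fcfs_states_def mem_Collect_eq
proof (induction rule: rtranclp_induct)
  case (step u v)
  then have "set v \<subseteq> set_pmf \<beta>"
    using set_fcfs_step by (fastforce simp: fcfs_kernel_def)
  moreover have "map f v \<in> set_pmf (fcfs_kernel E \<alpha> (map f u))"
    using step fcfs_kernel_map[OF assms(1,2)] by simp
  ultimately show ?case using step.IH by (auto intro: rtranclp.rtrancl_into_rtrancl)
qed simp

lemma stationary_fcfs_map:
  assumes "\<forall>a\<in>set_pmf \<beta>. \<forall>b\<in>set_pmf \<beta>. E' a b = E (f a) (f b)" "map_pmf f \<beta> = \<alpha>"
    and "stationary (fcfs_kernel E' \<beta>) (fcfs_states E' \<beta>) \<pi>"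
  shows "stationary (fcfs_kernel E \<alpha>) (fcfs_states E \<alpha>) (map_pmf (map f) \<pi>)"
  using assms fcfs_states_map[OF assms(1,2)] fcfs_kernel_map[OF assms(1,2)]
  by (intro stationary_map_pmf_lumped[OF assms(3)]) auto

section \<open>Decomposition as a relabelling\<close>

definition merge_nodes :: "'v \<Rightarrow> 'v \<Rightarrow> 'v \<Rightarrow> 'v \<Rightarrow> 'v" where
  "merge_nodes y z x u = (if u = y \<or> u = z then x else u)"

lemma decomposition_edges_merge:
  assumes "matching_model V E \<alpha>" "decomposition V E \<alpha> x y z V' E' \<beta>"
  shows "\<forall>a\<in>set_pmf \<beta>. \<forall>b\<in>set_pmf \<beta>.
    E' a b = E (merge_nodes y z x a) (merge_nodes y z x b)"
proof -
  have irrefl: "\<And>u. \<not> E u u" using assms(1) by (simp add: matching_model_def simple_graph_def)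
  from assms(2) have "x \<in> V" "y \<notin> V" "z \<notin> V" "y \<noteq> z"
    and nodes: "set_pmf \<beta> = (V - {x}) \<union> {y, z}"
    and edges: "\<And>u v. E' u v \<longleftrightarrow> (u \<in> V - {x} \<and> v \<in> V - {x} \<and> E u v)
      \<or> (u \<in> {y, z} \<and> v \<in> V - {x} \<and> E x v) \<or> (u \<in> V - {x} \<and> v \<in> {y, z} \<and> E u x)"
    unfolding decomposition_def by blast+
  with irrefl show ?thesis unfolding nodes edges merge_nodes_def by auto
qed

lemma decomposition_map_merge:
  assumes "matching_model V E \<alpha>" "decomposition V E \<alpha> x y z V' E' \<beta>"
  shows "map_pmf (merge_nodes y z x) \<beta> = \<alpha>"
proof (rule pmf_eqI)
  fix j
  have sa: "set_pmf \<alpha> = V" using assms(1) by (simp add: matching_model_def)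
  from assms(2) have xV: "x \<in> V" and yz: "y \<notin> V" "z \<notin> V" "y \<noteq> z"
    and sb: "set_pmf \<beta> = (V - {x}) \<union> {y, z}" and pyz: "pmf \<beta> y + pmf \<beta> z = pmf \<alpha> x"
    and peq: "\<forall>i\<in>V - {x}. pmf \<beta> i = pmf \<alpha> i"
    unfolding decomposition_def by auto
  have out: "pmf r i = 0" if "i \<notin> set_pmf r" for r :: "'v pmf" and i
    using that by (simp add: set_pmf_eq)
  consider "j = x" | "j = y \<or> j = z" | "j \<noteq> x" "j \<noteq> y" "j \<noteq> z"
    by blast
  then show "pmf (map_pmf (merge_nodes y z x) \<beta>) j = pmf \<alpha> j"
  proof cases
    case 1
    then have "merge_nodes y z x -` {j} = {x, y, z}"
      using xV yz by (auto simp: merge_nodes_def split: if_splits)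
    moreover have "x \<noteq> y" "x \<noteq> z" using xV yz by auto
    moreover have "pmf \<beta> x = 0" using out[of x \<beta>] sb xV yz by auto
    ultimately show ?thesis using 1 pyz yz by (simp add: pmf_map measure_measure_pmf_finite)
  next
    case 2
    then have "merge_nodes y z x -` {j} = {}"
      using xV yz by (auto simp: merge_nodes_def split: if_splits)
    then show ?thesis using 2 yz out[of j \<alpha>] sa by (auto simp: pmf_map)
  next
    case 3
    then have "merge_nodes y z x -` {j} = {j}" by (auto simp: merge_nodes_def)
    moreover have "pmf \<beta> j = pmf \<alpha> j"
      using 3 peq out[of j \<alpha>] out[of j \<beta>] sa sb by (cases "j \<in> V") auto
    ultimately show ?thesis by (simp add: pmf_map measure_pmf_single)
  qed
qed

theorem mainTheorem12:
  fixes V V' :: "'v set" and E E' :: "'v \<Rightarrow> 'v \<Rightarrow> bool"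
    and \<alpha> \<beta> :: "'v pmf" and x y z :: 'v and \<pi>x \<pi>yz :: "'v list pmf"
  assumes "matching_model V E \<alpha>"
    and "decomposition V E \<alpha> x y z V' E' \<beta>"
    and "positive_recurrent (fcfs_kernel E \<alpha>) (fcfs_states E \<alpha>)"
    and "positive_recurrent (fcfs_kernel E' \<beta>) (fcfs_states E' \<beta>)"
    and "stationary (fcfs_kernel E \<alpha>) (fcfs_states E \<alpha>) \<pi>x"
    and "stationary (fcfs_kernel E' \<beta>) (fcfs_states E' \<beta>) \<pi>yz"
  shows "mean_length \<pi>x = mean_length \<pi>yz"
proof -
  let ?f = "merge_nodes y z x"
  have image_stationary:
    "stationary (fcfs_kernel E \<alpha>) (fcfs_states E \<alpha>) (map_pmf (map ?f) \<pi>yz)"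
    by (rule stationary_fcfs_map[OF decomposition_edges_merge decomposition_map_merge assms(6)])
       (fact assms(1,2))+
  have "summable (\<lambda>n. avoid_prob (fcfs_kernel E \<alpha>) [] n [])"
    using assms(3) by (simp add: positive_recurrent_def fcfs_states_def)
  then have "\<pi>x = map_pmf (map ?f) \<pi>yz"
    using assms(5) image_stationary
    by (intro stationary_unique_if_positive_recurrent_state) (simp_all add: fcfs_states_def)
  then show ?thesis by (simp add: mean_length_def)
qed

end
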